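(* Let $a_0,\dots,a_4,b_0,\dots,b_4>0$. Assume $Q<0$, $z_0>0$ (so that $\xi^{ext}_1,\dots,\xi^{ext}_4$ are real) and $\xi_{min}>0$. If either (a) $P_5(\xi_{min})=0$ or (b) $P_5(\xi_{max})=0$, then the quartic operator $\mathcal{Q}$ has at least two fixed points in $\mathbb{R}_>^2$, i.e. $N_>^{fix}(\mathcal{Q})\ge 2$.
   Context: Quartic operator on $\mathbb{R}_+^2=\{(x,y):x\ge0,y\ge0\}$: $\mathcal{Q}(x,y)=\big(\sum_{i=0}^4\binom{4}{i}a_i x^{4-i}y^i,\ \sum_{i=0}^4\binom{4}{i}b_i x^{4-i}y^i\big)$; $\mathbb{R}_>^2=\{(x,y):x>0,y>0\}$; $N_>^{fix}(\mathcal{Q})$ is the number of fixed points of $\mathcal{Q}$ in $\mathbb{R}_>^2$. Set $\mu_0=a_4$, $\mu_1=4a_3-b_4$, $\mu_2=6a_2-4b_3$, $\mu_3=4a_1-6b_2$, $\mu_4=a_0-4b_1$, $\mu_5=b_0$, and $P_5(\xi)=\mu_0\xi^5+\mu_1\xi^4+\mu_2\xi^3+\mu_3\xi^2+\mu_4\xi-\mu_5$. Define $p=\frac{15\mu_0\mu_2-6\mu_1^2}{25\mu_0^2}$, $q=\frac{50\mu_0^2\mu_3+8\mu_1^3-30\mu_0\mu_1\mu_2}{125\mu_0^3}$, $r=\frac{15\mu_0\mu_1^2\mu_2-50\mu_0^2\mu_1\mu_3-3\mu_1^4+125\mu_0^3\mu_4}{625\mu_0^4}$ (so that $\omega^4+p\omega^2+q\omega+r=P_5'(\omega-\frac{\mu_1}{5\mu_0})/(5\mu_0)$),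 $a=-\frac{p^2}{12}-r$, $b=-\frac{p^3}{108}+\frac{pr}{3}-\frac{q^2}{8}$, $Q=(a/3)^3+(b/2)^2$. When $Q<0$ (hence $a<0$), let $\alpha\in[0,\pi]$ with $\cos\alpha=-\frac{b}{2}\left(-\frac{3}{a}\right)^{3/2}$ and $z_0=2\sqrt{-a/3}\,\cos\!\left(\frac{2\pi}{3}+\frac{\alpha}{3}\right)-\frac{p}{3}$. For $z_0>0$ put $\xi^{ext}_{1,2}=\frac12\Big(\sqrt{2z_0}\pm\sqrt{2z_0-4\big(\frac p2+z_0+\frac{q}{2\sqrt{2z_0}}\big)}\Big)-\frac{\mu_1}{5\mu_0}$, $\xi^{ext}_{3,4}=\frac12\Big(-\sqrt{2z_0}\pm\sqrt{2z_0-4\big(\frac p2+z_0-\frac{q}{2\sqrt{2z_0}}\big)}\Big)-\frac{\mu_1}{5\mu_0}$, and $\xi_{min}=\min_j\xi^{ext}_j$, $\xi_{max}=\max_j\xi^{ext}_j$. *)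

theory Defs
  imports Complex_Main
begin

text \<open>Coefficients a_0..a_4, b_0..b_4 are given as functions nat => real (only indices 0..4 used).\<close>

definition quartic_op :: "(nat \<Rightarrow> real) \<Rightarrow> (nat \<Rightarrow> real) \<Rightarrow> real \<times> real \<Rightarrow> real \<times> real" where
  "quartic_op a b = (\<lambda>(x, y).
     ((\<Sum>i=0..4. real (4 choose i) * a i * x ^ (4 - i) * y ^ i),
      (\<Sum>i=0..4. real (4 choose i) * b i * x ^ (4 - i) * y ^ i)))"

definition fixed_points_pos :: "(nat \<Rightarrow> real) \<Rightarrow> (nat \<Rightarrow> real) \<Rightarrow> (real \<times> real) set" where
  "fixed_points_pos a b = {(x, y). x > 0 \<and> y > 0 \<and> quartic_op a b (x, y) = (x, y)}"

definition mu :: "(nat \<Rightarrow> real) \<Rightarrow> (nat \<Rightarrow> real) \<Rightarrow> nat \<Rightarrow> real" where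
  "mu a b i = (if i = 0 then a 4
    else if i = 1 then 4 * a 3 - b 4
    else if i = 2 then 6 * a 2 - 4 * b 3
    else if i = 3 then 4 * a 1 - 6 * b 2
    else if i = 4 then a 0 - 4 * b 1
    else b 0)"

definition P5 :: "(nat \<Rightarrow> real) \<Rightarrow> (nat \<Rightarrow> real) \<Rightarrow> real \<Rightarrow> real" where
  "P5 a b \<xi> = mu a b 0 * \<xi>^5 + mu a b 1 * \<xi>^4 + mu a b 2 * \<xi>^3 + mu a b 3 * \<xi>^2
      + mu a b 4 * \<xi> - mu a b 5"

definition pp :: "(nat \<Rightarrow> real) \<Rightarrow> (nat \<Rightarrow> real) \<Rightarrow> real" where
  "pp a b = (let m = mu a b in (15 * m 0 * m 2 - 6 * (m 1)^2) / (25 * (m 0)^2))"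

definition qq :: "(nat \<Rightarrow> real) \<Rightarrow> (nat \<Rightarrow> real) \<Rightarrow> real" where
  "qq a b = (let m = mu a b in
     (50 * (m 0)^2 * m 3 + 8 * (m 1)^3 - 30 * m 0 * m 1 * m 2) / (125 * (m 0)^3))"

definition rr :: "(nat \<Rightarrow> real) \<Rightarrow> (nat \<Rightarrow> real) \<Rightarrow> real" where
  "rr a b = (let m = mu a b in
     (15 * m 0 * (m 1)^2 * m 2 - 50 * (m 0)^2 * m 1 * m 3 - 3 * (m 1)^4 + 125 * (m 0)^3 * m 4)
       / (625 * (m 0)^4))"

definition ca :: "(nat \<Rightarrow> real) \<Rightarrow> (nat \<Rightarrow> real) \<Rightarrow> real" where
  "ca a b = - ((pp a b)^2 / 12) - rr a b"

definition cb :: "(nat \<Rightarrow> real) \<Rightarrow> (nat \<Rightarrow> real) \<Rightarrow> real" where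
  "cb a b = - ((pp a b)^3 / 108) + pp a b * rr a b / 3 - (qq a b)^2 / 8"

definition cQ :: "(nat \<Rightarrow> real) \<Rightarrow> (nat \<Rightarrow> real) \<Rightarrow> real" where
  "cQ a b = (ca a b / 3)^3 + (cb a b / 2)^2"

text \<open>alpha in [0,pi] with cos alpha = -(b/2) (-3/a)^(3/2); arccos gives exactly this.\<close>
definition alpha :: "(nat \<Rightarrow> real) \<Rightarrow> (nat \<Rightarrow> real) \<Rightarrow> real" where
  "alpha a b = arccos (- (cb a b / 2) * (sqrt (-3 / ca a b))^3)"

definition z0 :: "(nat \<Rightarrow> real) \<Rightarrow> (nat \<Rightarrow> real) \<Rightarrow> real" where
  "z0 a b = 2 * sqrt (- ca a b / 3) * cos (2 * pi / 3 + alpha a b / 3) - pp a b / 3"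

definition xi_ext :: "(nat \<Rightarrow> real) \<Rightarrow> (nat \<Rightarrow> real) \<Rightarrow> real list" where
  "xi_ext a b = (let z = z0 a b; p = pp a b; q = qq a b; s = sqrt (2 * z);
                     sh = mu a b 1 / (5 * mu a b 0);
                     d1 = sqrt (2 * z - 4 * (p / 2 + z + q / (2 * s)));
                     d2 = sqrt (2 * z - 4 * (p / 2 + z - q / (2 * s)))
                 in [(s + d1) / 2 - sh, (s - d1) / 2 - sh, (- s + d2) / 2 - sh, (- s - d2) / 2 - sh])"

definition xi_min :: "(nat \<Rightarrow> real) \<Rightarrow> (nat \<Rightarrow> real) \<Rightarrow> real" where
  "xi_min a b = Min (set (xi_ext a b))"

definition xi_max :: "(nat \<Rightarrow> real) \<Rightarrow> (nat \<Rightarrow> real) \<Rightarrow> real" where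
  "xi_max a b = Max (set (xi_ext a b))"

end

theory Submission
  imports Defs
begin

text \<open>A fixed point \<open>(x, t x)\<close> with \<open>x, t > 0\<close> is the same as a positive root \<open>t\<close> of \<open>P5\<close>
  (the cube root of the first equation then fixes \<open>x\<close>). By Viete's trigonometric solution of the
  resolvent cubic and Ferrari's method, \<open>P5'\<close> is \<open>5\<mu>\<^sub>0\<close> times the product of \<open>\<xi> - \<xi>\<^sup>e\<^sup>x\<^sup>t\<^sub>j\<close> over four
  distinct real numbers. Since \<open>P5(0) = -b\<^sub>0 < 0\<close> and \<open>P5 \<rightarrow> \<infinity>\<close>, a root at the smallest critical point
  (where \<open>P5\<close> starts decreasing) forces another root further right, and a root at the largest
  critical point (where \<open>P5\<close> has just been decreasing) forces another root in \<open>(0, \<xi>\<^sub>m\<^sub>a\<^sub>x)\<close>.\<close>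

lemma depressed_cubic_trig_roots:
  fixes A B :: real
  assumes disc: "(A/3)^3 + (B/2)^2 < 0"
  defines "\<alpha> \<equiv> arccos (- (B/2) * (sqrt (-3/A))^3)" and "m \<equiv> sqrt (-A/3)"
  shows "\<And>\<theta>. \<theta> \<in> {\<alpha>/3, 2*pi/3 - \<alpha>/3, 2*pi/3 + \<alpha>/3} \<Longrightarrow>
           (2*m*cos \<theta>)^3 + A*(2*m*cos \<theta>) + B = 0"
    and "2*m*cos (2*pi/3 + \<alpha>/3) < 2*m*cos (2*pi/3 - \<alpha>/3)"
    and "2*m*cos (2*pi/3 - \<alpha>/3) < 2*m*cos (\<alpha>/3)"
proof -
  have A: "A < 0"
  proof (rule ccontr)
    assume "\<not> A < 0"
    then have "(A/3)^3 \<ge> 0" by simp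
    with disc show False by (smt (verit) zero_le_power2)
  qed
  then have m: "m > 0" "A = -3*m^2" by (simp_all add: m_def)
  define k where "k = - (B/2) * (sqrt (-3/A))^3"
  have "sqrt (-3/A) * m = 1"
    using A by (simp add: m_def real_sqrt_mult[symmetric] field_simps)
  moreover have "k * m^3 = - (B/2) * (sqrt (-3/A) * m)^3" by (simp add: k_def power_mult_distrib)
  ultimately have km: "k * m^3 = - (B/2)" by simp
  have "k^2 * (- ((A/3)^3)) = (B/2)^2"
  proof -
    have "(m^3)^2 = (m^2)^3" by (simp flip: power_mult)
    then have "(m^3)^2 = - ((A/3)^3)" using m(2) by (simp add: power_mult_distrib)
    moreover have "(k*m^3)^2 = (B/2)^2" using km by simp
    ultimately show ?thesis by (simp add: power_mult_distrib)
  qed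
  moreover have "(B/2)^2 < - ((A/3)^3)" "- ((A/3)^3) > 0" using disc A by simp_all
  ultimately have "k^2 < 1" by (smt (verit) mult_less_cancel_right2)
  then have k: "-1 < k" "k < 1" by (simp_all add: abs_square_less_1 abs_less_iff)
  have \<alpha>: "\<alpha> = arccos k" "0 < \<alpha>" "\<alpha> < pi"
    using arccos_lt_bounded[OF k] by (simp_all add: \<alpha>_def k_def)
  \<comment> \<open>Substituting \<open>z = 2m cos \<theta>\<close> turns the cubic into \<open>2m\<^sup>3 (cos 3\<theta> - cos \<alpha>)\<close>.\<close>
  show "(2*m*cos \<theta>)^3 + A*(2*m*cos \<theta>) + B = 0"
    if \<theta>: "\<theta> \<in> {\<alpha>/3, 2*pi/3 - \<alpha>/3, 2*pi/3 + \<alpha>/3}" for \<theta>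
  proof -
    have "3*\<theta> \<in> {\<alpha>, 2*pi - \<alpha>, 2*pi + \<alpha>}" using \<theta> by auto
    then have "cos (3*\<theta>) = cos \<alpha>" by (auto simp: cos_diff cos_add)
    then have c3: "cos (3*\<theta>) = k" using k \<alpha>(1) by simp
    have "(2*m*cos \<theta>)^3 + A*(2*m*cos \<theta>) + B = 2*m^3*(4*cos \<theta>^3 - 3*cos \<theta>) + B"
      using m(2) by (simp add: algebra_simps power_mult_distrib power2_eq_square power3_eq_cube)
    also have "\<dots> = 2*(k*m^3) + B" using c3 cos_treble_cos[of \<theta>] by simp
    also have "\<dots> = 0" using km by simp
    finally show ?thesis .
  qed
  have "cos (2*pi/3 + \<alpha>/3) < cos (2*pi/3 - \<alpha>/3)" "cos (2*pi/3 - \<alpha>/3) < cos (\<alpha>/3)"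
    using \<alpha>(2,3) by (subst cos_mono_less_eq; auto simp: field_simps)+
  then show "2*m*cos (2*pi/3 + \<alpha>/3) < 2*m*cos (2*pi/3 - \<alpha>/3)"
    "2*m*cos (2*pi/3 - \<alpha>/3) < 2*m*cos (\<alpha>/3)"
    using m(1) by simp_all
qed

lemma monic_quadratic_vieta:
  fixes \<sigma> \<pi> z1 z2 :: real
  assumes "z1 \<noteq> z2" and "z1^2 - \<sigma>*z1 + \<pi> = 0" and "z2^2 - \<sigma>*z2 + \<pi> = 0"
  shows "\<sigma> = z1 + z2" and "\<pi> = z1 * z2"
proof -
  have "(z1 - z2) * (z1 + z2 - \<sigma>) = 0"
    using assms(2,3) by (simp add: algebra_simps power2_eq_square)
  then show "\<sigma> = z1 + z2" using assms(1) by simp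
  then show "\<pi> = z1 * z2" using assms(2) by (simp add: algebra_simps power2_eq_square)
qed

lemma ferrari_coefficients:
  fixes p q r z :: real
  assumes "z > 0" and "z^3 + p*z^2 + (p^2/4 - r)*z - q^2/8 = 0"
  defines "s \<equiv> sqrt (2*z)"
  defines "c1 \<equiv> p/2 + z + q/(2*s)" and "c2 \<equiv> p/2 + z - q/(2*s)"
  shows "p = c1 + c2 - s^2" and "q = s * (c1 - c2)" and "r = c1 * c2"
proof -
  have s: "s > 0" "s^2 = 2*z" using assms(1) by (simp_all add: s_def)
  then show "p = c1 + c2 - s^2" "q = s * (c1 - c2)" by (simp_all add: c1_def c2_def field_simps)
  have "c1 * c2 = (p/2 + z)^2 - q^2/(4*s^2)"
    using s(1) by (simp add: c1_def c2_def field_simps power2_eq_square)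
  also have "\<dots> = (p/2 + z)^2 - q^2/(8*z)" using s(2) by simp
  also have "\<dots> = r"
    using assms(1,2) by (simp add: field_simps power2_eq_square power3_eq_cube)
  finally show "r = c1 * c2" ..
qed

text \<open>The resolvent cubic of \<open>(w\<^sup>2 - s w + c)(w\<^sup>2 + s w + d)\<close> vanishes at \<open>s\<^sup>2/2\<close>; its other two
  roots are \<open>(\<surd>e1 \<plusminus> \<surd>e2)\<^sup>2/8\<close>, where \<open>e1, e2\<close> are the discriminants of the quadratic factors.\<close>
lemma resolvent_of_product:
  fixes s c d z :: real
  defines "p \<equiv> c + d - s^2" and "q \<equiv> s * (c - d)" and "r \<equiv> c * d"
  defines "e1 \<equiv> s^2 - 4*c" and "e2 \<equiv> s^2 - 4*d"
  shows "z^3 + p*z^2 + (p^2/4 - r)*z - q^2/8 = (z - s^2/2) * (z^2 - (e1 + e2)/4 * z + (e1 - e2)^2/64)"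
  unfolding assms by (simp add: field_simps power2_eq_square power3_eq_cube)

lemma ferrari_quartic_roots:
  fixes p q r z0 z1 z2 :: real
  assumes z: "0 < z0" "z0 < z1" "z0 < z2" "z1 \<noteq> z2"
    and roots: "\<And>z. z \<in> {z0, z1, z2} \<Longrightarrow> z^3 + p*z^2 + (p^2/4 - r)*z - q^2/8 = 0"
  defines "s \<equiv> sqrt (2*z0)"
  defines "c1 \<equiv> p/2 + z0 + q/(2*s)" and "c2 \<equiv> p/2 + z0 - q/(2*s)"
  defines "u \<equiv> sqrt (2*z0 - 4*c1)" and "v \<equiv> sqrt (2*z0 - 4*c2)"
  shows "w^4 + p*w^2 + q*w + r = (w - (s+u)/2) * (w - (s-u)/2) * (w - (-s+v)/2) * (w - (-s-v)/2)"
    and "distinct [(s+u)/2, (s-u)/2, (-s+v)/2, (-s-v)/2]"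
proof -
  have s: "s > 0" "s^2 = 2*z0" using z(1) by (simp_all add: s_def)
  note coef = ferrari_coefficients[OF z(1) roots[OF insertI1], folded s_def, folded c1_def c2_def]
  define d1 where "d1 = s^2 - 4*c1"
  define d2 where "d2 = s^2 - 4*c2"
  define Q where "Q z = z^2 - (d1 + d2)/4 * z + (d1 - d2)^2/64" for z
  have "z^3 + p*z^2 + (p^2/4 - r)*z - q^2/8 = (z - z0) * Q z" for z
    unfolding coef Q_def d1_def d2_def
    using resolvent_of_product[where s=s and c=c1 and d=c2 and z=z] s(2) by simp
  then have Q_roots: "Q z1 = 0" "Q z2 = 0" using roots z by auto
  note vieta = monic_quadratic_vieta[OF z(4) Q_roots[unfolded Q_def]]
  have sum: "d1 + d2 = 4 * (z1 + z2)" and prod: "(d1 - d2)^2 = 64 * (z1 * z2)"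
    using vieta by simp_all
  have "d1 * d2 = ((d1 + d2)^2 - (d1 - d2)^2) / 4" by (simp add: algebra_simps power2_eq_square)
  also have "\<dots> = 4 * (z1 - z2)^2" unfolding sum prod by (simp add: field_simps power2_eq_square)
  finally have "d1 * d2 > 0" "d1 + d2 > 0" using sum z by simp_all
  then have "d1 > 0" "d2 > 0" by (smt (verit) mult_nonneg_nonpos mult_nonpos_nonneg)+
  then have u: "u > 0" "u^2 = d1" and v: "v > 0" "v^2 = d2"
    using s(2) by (simp_all add: u_def v_def d1_def d2_def)
  show "w^4 + p*w^2 + q*w + r = (w - (s+u)/2) * (w - (s-u)/2) * (w - (-s+v)/2) * (w - (-s-v)/2)"
  proof -
    have "(w - (s+u)/2) * (w - (s-u)/2) = w^2 - s*w + c1"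
      using u(2) by (simp add: d1_def field_simps power2_eq_square)
    moreover have "(w - (-s+v)/2) * (w - (-s-v)/2) = w^2 + s*w + c2"
      using v(2) by (simp add: d2_def field_simps power2_eq_square)
    moreover have "(w^2 - s*w + c1) * (w^2 + s*w + c2) = w^4 + p*w^2 + q*w + r"
      unfolding coef by (simp add: algebra_simps power2_eq_square power4_eq_xxxx)
    ultimately show ?thesis by (metis mult.assoc)
  qed
  have "(z0 - z1) * (z0 - z2) = Q z0"
    unfolding Q_def sum prod by (simp add: algebra_simps power2_eq_square)
  also have "\<dots> = (z0 - (u+v)^2/8) * (z0 - (u-v)^2/8)"
    unfolding Q_def u(2)[symmetric] v(2)[symmetric] by (simp add: field_simps power2_eq_square)
  finally have "(u+v)^2 \<noteq> (2*s)^2" "(u-v)^2 \<noteq> (2*s)^2"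
    using s(2) z by (auto simp: power_mult_distrib)
  then have "u + v \<noteq> 2*s" "u + v \<noteq> -2*s" "u - v \<noteq> 2*s" "u - v \<noteq> -2*s" by auto
  then show "distinct [(s+u)/2, (s-u)/2, (-s+v)/2, (-s-v)/2]" using u(1) v(1) by auto
qed

lemma decreasing_right_of_least_critical_point:
  fixes f :: "real \<Rightarrow> real" and S :: "real set"
  assumes S: "finite S" "card S \<ge> 2" "even (card S)" and "c > 0"
    and der: "\<And>x. (f has_real_derivative c * (\<Prod>y\<in>S. x - y)) (at x)"
  shows "\<exists>t > Min S. f t < f (Min S)"
proof -
  define m where "m = Min S"
  have "S \<noteq> {}" using S by auto
  then have m: "m \<in> S" "\<And>y. y \<in> S \<Longrightarrow> m \<le> y" using S(1) by (simp_all add: m_def)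
  have "card (S - {m}) = card S - 1" using S(1) m(1) by simp
  then have card: "odd (card (S - {m}))" "card (S - {m}) \<noteq> 0" using S(2,3) by auto
  define m2 where "m2 = Min (S - {m})"
  have m2: "m < m2" "\<And>y. y \<in> S - {m} \<Longrightarrow> m2 \<le> y"
    using S card(2) m Min_in[of "S - {m}"] by (fastforce simp: m2_def card_eq_0_iff)+
  define t where "t = (m + m2) / 2"
  have "m < t" using m2(1) by (simp add: t_def)
  moreover have "f t < f m"
  proof (rule DERIV_neg_imp_decreasing_open[where f = f])
    show "m < t" by fact
    show "continuous_on {m..t} f" using der by (intro DERIV_continuous_on) (auto intro: has_field_derivative_at_within)
    fix x assume x: "m < x" "x < t"
    have "(\<Prod>y\<in>S - {m}. y - x) > 0" using m2 x by (intro prod_pos) (fastforce simp: t_def)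
    then have "(\<Prod>y\<in>S - {m}. x - y) < 0"
      using card(1) by (subst prod_diff_swap) simp
    then have "c * (\<Prod>y\<in>S. x - y) < 0"
      using S(1) m(1) x \<open>c > 0\<close> by (simp add: prod.remove mult_pos_neg mult_neg_pos)
    then show "\<exists>y. (f has_real_derivative y) (at x) \<and> y < 0" using der by blast
  qed
  ultimately show ?thesis unfolding m_def by blast
qed

lemma decreasing_left_of_greatest_critical_point:
  fixes f :: "real \<Rightarrow> real" and S :: "real set"
  assumes S: "finite S" "card S \<ge> 2" and "c > 0"
    and der: "\<And>x. (f has_real_derivative c * (\<Prod>y\<in>S. x - y)) (at x)"
  shows "\<exists>t. Min S < t \<and> t < Max S \<and> f (Max S) < f t"
proof -
  define M where "M = Max S"
  have "S \<noteq> {}" using S by auto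
  then have M: "M \<in> S" "\<And>y. y \<in> S \<Longrightarrow> y \<le> M" using S(1) by (simp_all add: M_def)
  have "card (S - {M}) \<noteq> 0" using S M(1) by simp
  then have "S - {M} \<noteq> {}" by (metis card.empty)
  define M2 where "M2 = Max (S - {M})"
  have M2: "M2 \<in> S" "M2 < M" "\<And>y. y \<in> S - {M} \<Longrightarrow> y \<le> M2"
    using S(1) \<open>S - {M} \<noteq> {}\<close> M Max_in[of "S - {M}"] by (fastforce simp: M2_def)+
  define t where "t = (M2 + M) / 2"
  have t: "M2 < t" "t < M" using M2(2) by (simp_all add: t_def)
  moreover have "f M < f t"
  proof (rule DERIV_neg_imp_decreasing_open[where f = f])
    show "t < M" by fact
    show "continuous_on {t..M} f" using der by (intro DERIV_continuous_on) (auto intro: has_field_derivative_at_within)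
    fix x assume x: "t < x" "x < M"
    have "(\<Prod>y\<in>S - {M}. x - y) > 0" using M2(3) x t by (intro prod_pos) fastforce
    then have "c * (\<Prod>y\<in>S. x - y) < 0"
      using S(1) M(1) x \<open>c > 0\<close> by (simp add: prod.remove mult_pos_neg mult_neg_pos)
    then show "\<exists>y. (f has_real_derivative y) (at x) \<and> y < 0" using der by blast
  qed
  moreover have "Min S \<le> M2" using S(1) M2(1) by simp
  ultimately show ?thesis unfolding M_def by (intro exI[of _ t]) auto
qed

lemma two_positive_roots_if_extremal_critical_root:
  fixes f :: "real \<Rightarrow> real" and S :: "real set"
  assumes S: "finite S" "S \<noteq> {}" "even (card S)" and "c > 0"
    and der: "\<And>x. (f has_real_derivative c * (\<Prod>y\<in>S. x - y)) (at x)"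
    and f0: "f 0 < 0" and f_at_top: "filterlim f at_top at_top"
    and Min_pos: "Min S > 0" and root: "f (Min S) = 0 \<or> f (Max S) = 0"
  shows "\<exists>t1 t2. 0 < t1 \<and> 0 < t2 \<and> t1 \<noteq> t2 \<and> f t1 = 0 \<and> f t2 = 0"
proof -
  have cont: "continuous_on A f" for A
    using der by (intro DERIV_continuous_on) (auto intro: has_field_derivative_at_within)
  have "card S \<noteq> 0" using S by simp
  with S(3) have card: "card S \<ge> 2" by presburger
  show ?thesis
  proof (cases "f (Min S) = 0")
    case True
    obtain t where t: "Min S < t" "f t < 0"
      using decreasing_right_of_least_critical_point[OF S(1) card S(3) \<open>c > 0\<close> der] True by auto
    obtain N where "\<And>x. x \<ge> N \<Longrightarrow> f x > 0"
      using f_at_top by (auto simp: filterlim_at_top_dense eventually_at_top_linorder)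
    then have "f (max N t) > 0" by simp
    then obtain r where "t \<le> r" "f r = 0"
      using IVT'[of f t 0 "max N t"] t(2) cont by force
    with t(1) True Min_pos show ?thesis by (intro exI[of _ "Min S"] exI[of _ r]) auto
  next
    case False
    then have fM: "f (Max S) = 0" using root by simp
    obtain t where t: "Min S < t" "t < Max S" "0 < f t"
      using decreasing_left_of_greatest_critical_point[OF S(1) card \<open>c > 0\<close> der] fM by auto
    then obtain r where r: "0 \<le> r" "r \<le> t" "f r = 0"
      using IVT'[of f 0 0 t] f0 Min_pos cont by force
    moreover have "r \<noteq> 0" using r(3) f0 by auto
    ultimately show ?thesis using t Min_pos fM by (intro exI[of _ r] exI[of _ "Max S"]) auto
  qed
qed

lemma resolvent_cubic_roots:
  fixes a b :: "nat \<Rightarrow> real"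
  assumes "cQ a b < 0"
  obtains z1 z2 where "z0 a b < z1" "z1 < z2"
    "\<And>z. z \<in> {z0 a b, z1, z2} \<Longrightarrow>
       z^3 + pp a b * z^2 + ((pp a b)^2/4 - rr a b) * z - (qq a b)^2/8 = 0"
proof -
  define p A B where "p = pp a b" and "A = ca a b" and "B = cb a b"
  have "(A/3)^3 + (B/2)^2 < 0" using assms by (simp add: cQ_def A_def B_def)
  note V = depressed_cubic_trig_roots[OF this]
  define \<alpha> m where "\<alpha> = arccos (- (B/2) * (sqrt (-3/A))^3)" and "m = sqrt (-A/3)"
  have z0: "z0 a b = 2*m*cos (2*pi/3 + \<alpha>/3) - p/3"
    by (simp add: z0_def alpha_def m_def \<alpha>_def A_def B_def p_def)
  have depress: "z^3 + p*z^2 + (p^2/4 - rr a b)*z - (qq a b)^2/8 = (z + p/3)^3 + A*(z + p/3) + B" for z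
    by (simp add: A_def B_def p_def ca_def cb_def field_simps power2_eq_square power3_eq_cube)
  show thesis
  proof (rule that[of "2*m*cos (2*pi/3 - \<alpha>/3) - p/3" "2*m*cos (\<alpha>/3) - p/3"])
    show "z0 a b < 2*m*cos (2*pi/3 - \<alpha>/3) - p/3"
      "2*m*cos (2*pi/3 - \<alpha>/3) - p/3 < 2*m*cos (\<alpha>/3) - p/3"
      using V(2,3) by (simp_all add: z0 \<alpha>_def m_def)
    fix z assume "z \<in> {z0 a b, 2*m*cos (2*pi/3 - \<alpha>/3) - p/3, 2*m*cos (\<alpha>/3) - p/3}"
    then have "\<exists>\<theta> \<in> {\<alpha>/3, 2*pi/3 - \<alpha>/3, 2*pi/3 + \<alpha>/3}. z + p/3 = 2*m*cos \<theta>" by (auto simp: z0)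
    then show "z^3 + pp a b * z^2 + ((pp a b)^2/4 - rr a b) * z - (qq a b)^2/8 = 0"
      using V(1) unfolding depress[unfolded p_def] p_def \<alpha>_def m_def by auto
  qed
qed

lemma xi_ext_shifted_quartic_roots:
  fixes a b :: "nat \<Rightarrow> real"
  assumes "cQ a b < 0" and "z0 a b > 0"
  defines "h \<equiv> mu a b 1 / (5 * mu a b 0)"
  shows "distinct (xi_ext a b)"
    and "(x + h)^4 + pp a b * (x + h)^2 + qq a b * (x + h) + rr a b = (\<Prod>\<xi>\<leftarrow>xi_ext a b. x - \<xi>)"
proof -
  obtain z1 z2 where z: "z0 a b < z1" "z1 < z2"
    "\<And>z. z \<in> {z0 a b, z1, z2} \<Longrightarrow> z^3 + pp a b * z^2 + ((pp a b)^2/4 - rr a b) * z - (qq a b)^2/8 = 0"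
    using resolvent_cubic_roots[OF assms(1)] by blast
  define s where "s = sqrt (2 * z0 a b)"
  define c1 where "c1 = pp a b / 2 + z0 a b + qq a b / (2*s)"
  define c2 where "c2 = pp a b / 2 + z0 a b - qq a b / (2*s)"
  define u where "u = sqrt (2 * z0 a b - 4*c1)"
  define v where "v = sqrt (2 * z0 a b - 4*c2)"
  have "z0 a b < z2" "z1 \<noteq> z2" using z(1,2) by simp_all
  note ferrari = ferrari_quartic_roots[OF assms(2) z(1) this z(3), folded s_def, folded c1_def c2_def,
      folded u_def v_def]
  have xi: "xi_ext a b = map (\<lambda>w. w - h) [(s+u)/2, (s-u)/2, (-s+v)/2, (-s-v)/2]"
    by (simp add: xi_ext_def Let_def s_def c1_def c2_def u_def v_def h_def)
  show "distinct (xi_ext a b)"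
    unfolding xi distinct_map using ferrari(2) by (auto intro: inj_onI)
  show "(x + h)^4 + pp a b * (x + h)^2 + qq a b * (x + h) + rr a b = (\<Prod>\<xi>\<leftarrow>xi_ext a b. x - \<xi>)"
    unfolding xi using ferrari(1)[of "x + h"] by (simp add: diff_diff_eq2 mult.assoc)
qed

lemma P5_derivative_shifted:
  fixes a b :: "nat \<Rightarrow> real"
  assumes "mu a b 0 \<noteq> 0"
  defines "h \<equiv> mu a b 1 / (5 * mu a b 0)"
  shows "(P5 a b has_real_derivative
           5 * mu a b 0 * ((x + h)^4 + pp a b * (x + h)^2 + qq a b * (x + h) + rr a b)) (at x)"
proof -
  have "(P5 a b has_real_derivative
          5 * mu a b 0 * x^4 + 4 * mu a b 1 * x^3 + 3 * mu a b 2 * x^2 + 2 * mu a b 3 * x + mu a b 4) (at x)"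
    unfolding P5_def[abs_def] by (auto intro!: derivative_eq_intros simp: eval_nat_numeral)
  moreover have "5 * mu a b 0 * ((x + h)^4 + pp a b * (x + h)^2 + qq a b * (x + h) + rr a b)
      = 5 * mu a b 0 * x^4 + 4 * mu a b 1 * x^3 + 3 * mu a b 2 * x^2 + 2 * mu a b 3 * x + mu a b 4"
    using assms(1) unfolding h_def pp_def qq_def rr_def Let_def
    by (simp add: field_simps power2_eq_square power3_eq_cube power4_eq_xxxx)
  ultimately show ?thesis by simp
qed

lemma P5_tendsto_at_top:
  fixes a b :: "nat \<Rightarrow> real"
  assumes "mu a b 0 > 0"
  shows "filterlim (P5 a b) at_top at_top"
proof -
  define g where "g x = mu a b 0 + mu a b 1 / x^1 + mu a b 2 / x^2 + mu a b 3 / x^3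
    + mu a b 4 / x^4 - mu a b 5 / x^5" for x :: real
  have vanish: "((\<lambda>x::real. c / x ^ k) \<longlongrightarrow> 0) at_top" if "k > 0" for c k
    using that by (intro tendsto_divide_0[OF tendsto_const] filterlim_at_top_imp_at_infinity
        filterlim_pow_at_top filterlim_ident)
  have "(g \<longlongrightarrow> mu a b 0 + 0 + 0 + 0 + 0 - 0) at_top"
    unfolding g_def[abs_def] by (intro tendsto_add tendsto_diff tendsto_const vanish) simp_all
  then have lim: "filterlim (\<lambda>x. g x * x^5) at_top at_top"
    using assms by (intro filterlim_tendsto_pos_mult_at_top filterlim_pow_at_top filterlim_ident) auto
  have eq: "eventually (\<lambda>x. g x * x^5 = P5 a b x) at_top"
    using eventually_gt_at_top[of 0] by eventually_elim (simp add: g_def P5_def field_simps eval_nat_numeral)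
  show ?thesis by (rule filterlim_mono_eventually[OF lim order_refl order_refl eq])
qed

lemma quartic_op_fixed_point_on_ray:
  fixes a b :: "nat \<Rightarrow> real"
  assumes apos: "\<forall>i\<le>4. a i > 0" and t: "t > 0" and root: "P5 a b t = 0"
  shows "\<exists>x>0. (x, t*x) \<in> fixed_points_pos a b"
proof -
  define A where "A = a 0 + 4*a 1*t + 6*a 2*t^2 + 4*a 3*t^3 + a 4*t^4"
  have "A > 0" using apos t unfolding A_def by (intro add_pos_pos mult_pos_pos) auto
  define x where "x = root 3 (1/A)"
  have x: "x > 0" "x^3 * A = 1" using \<open>A > 0\<close> by (simp_all add: x_def)
  have tA: "t * A = b 0 + 4*b 1*t + 6*b 2*t^2 + 4*b 3*t^3 + b 4*t^4"
    using root unfolding P5_def mu_def A_def by (simp add: algebra_simps eval_nat_numeral)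
  have form: "(\<Sum>i=0..4. real (4 choose i) * c i * x^(4-i) * (t*x)^i)
      = x * (x^3 * (c 0 + 4*c 1*t + 6*c 2*t^2 + 4*c 3*t^3 + c 4*t^4))" for c :: "nat \<Rightarrow> real"
    by (simp add: eval_nat_numeral algebra_simps power2_eq_square power3_eq_cube power4_eq_xxxx)
  have "quartic_op a b (x, t*x) = (x * (x^3 * A), x * (x^3 * (t * A)))"
    by (simp only: quartic_op_def prod.case form tA) (simp only: A_def)
  also have "\<dots> = (x, t*x)" using x(2) by (simp add: mult.left_commute)
  finally have "quartic_op a b (x, t*x) = (x, t*x)" .
  then show ?thesis using x(1) t by (auto simp: fixed_points_pos_def)
qed

theorem theorem2:
  fixes a b :: "nat \<Rightarrow> real"
  assumes apos: "\<forall>i\<le>4. a i > 0"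
    and bpos: "\<forall>i\<le>4. b i > 0"
    and Qneg: "cQ a b < 0"
    and z0pos: "z0 a b > 0"
    and ximin: "xi_min a b > 0"
    and root: "P5 a b (xi_min a b) = 0 \<or> P5 a b (xi_max a b) = 0"
  shows "\<exists>u v. u \<in> fixed_points_pos a b \<and> v \<in> fixed_points_pos a b \<and> u \<noteq> v"
proof -
  have mu0: "mu a b 0 > 0" using apos by (simp add: mu_def)
  define S where "S = set (xi_ext a b)"
  note xi = xi_ext_shifted_quartic_roots[OF Qneg z0pos]
  have S: "finite S" "S \<noteq> {}" "even (card S)"
    using distinct_card[OF xi(1)] by (auto simp: S_def xi_ext_def Let_def)
  have "(P5 a b has_real_derivative 5 * mu a b 0 * (\<Prod>\<xi>\<in>S. x - \<xi>)) (at x)" for x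
    using P5_derivative_shifted[of a b x, unfolded xi(2)] mu0
    by (simp add: S_def prod.distinct_set_conv_list[OF xi(1)])
  moreover have "P5 a b 0 < 0" using bpos by (simp add: P5_def mu_def)
  moreover have "Min S > 0" "P5 a b (Min S) = 0 \<or> P5 a b (Max S) = 0"
    using ximin root by (simp_all add: xi_min_def xi_max_def S_def)
  ultimately obtain t1 t2 where t: "0 < t1" "0 < t2" "t1 \<noteq> t2" "P5 a b t1 = 0" "P5 a b t2 = 0"
    using two_positive_roots_if_extremal_critical_root[OF S _ _ _ P5_tendsto_at_top[OF mu0]] mu0
    by (metis mult_pos_pos zero_less_numeral)
  obtain x1 x2 where "x1 > 0" "(x1, t1*x1) \<in> fixed_points_pos a b" "(x2, t2*x2) \<in> fixed_points_pos a b"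
    using quartic_op_fixed_point_on_ray[OF apos] t by meson
  moreover have "(x1, t1*x1) \<noteq> (x2, t2*x2)" using \<open>x1 > 0\<close> t(3) by auto
  ultimately show ?thesis by blast
qed

end
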